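(* Let $\mathcal{T}$ be a tower with $\mathbb{K}_0=\emptyset$ whose maps are elementary inclusions or elementary contractions (named by the naming convention below), let $\hat{\mathbb{K}}_0,\dots,\hat{\mathbb{K}}_m$ be its active small coning construction and $\mathcal{W}$ its contracting forest. Let $x$ be an internal node of $\mathcal{W}$ with children $y_1,y_2$. Then $c(x)\le 2\cdot|E(y_1)\setminus E(y_2)|$.
   Context: Elementary inclusion: $\mathbb{K}_{i+1}=\mathbb{K}_i\cup\{\sigma\}$, $\sigma\notin\mathbb{K}_i$. Elementary contraction of distinct vertices $u,v$: for one of them, say $v$, the vertex set of $\mathbb{K}_{i+1}$ is that of $\mathbb{K}_i$ minus $v$, $\phi_i(u)=\phi_i(v)=u$, identity elsewhere, $\mathbb{K}_{i+1}=\phi_i(\mathbb{K}_i)$. Active small coning construction: $\hat{\mathbb{K}}_0=\emptyset$; vertices flagged active/inactive, simplex active iff all its vertices are; $\mathrm{Act}\overline{\mathrm{St}}(w,\hat{\mathbb{K}}_i)$ = active simplices of $\hat{\mathbb{K}}_i$ in the closed star of $w$. Inclusion of $\sigma$: add $\sigma$ (new vertex active). Contraction of $u,v$: if $|\mathrm{Act}\overline{\mathrm{St}}(u,\hat{\mathbb{K}}_i)|\le|\mathrm{Act}\overline{\mathrm{St}}(v,\hat{\mathbb{K}}_i)|$, $\hat{\mathbb{K}}_{i+1}=\hat{\mathbb{K}}_i\cup\{\{v\}\cup\tau:\tau\in\mathrm{Act}\overline{\mathrm{St}}(u,\hat{\mathbb{K}}_i)\}$ and $u$ is marked inactive; otherwise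 symmetric. Naming convention: each contraction maps $u,v$ to the vertex not marked inactive. Contracting forest: $\mathcal{W}_0=\emptyset$; inclusion of a simplex of positive dimension leaves the forest unchanged; inclusion of a vertex $w$ adds a single-node tree labeled $w$; a contraction of $u,v$ makes the roots labeled $u$ and $v$ the two children of a new root labeled with the image vertex; $\mathcal{W}=\mathcal{W}_m$. Each internal node $x$ corresponds to one contraction $\phi_i$, and its cost is $c(x)=|\hat{\mathbb{K}}_{i+1}\setminus\hat{\mathbb{K}}_i|$; leaves have cost $0$. Let $\Sigma$ be the collection of simplices added at elementary inclusions; for $\sigma\in\Sigma$ added by $\phi_i$, each vertex of $\sigma$ labels a root of $\mathcal{W}_{i+1}$, i.e., corresponds to a node of $\mathcal{W}$; $E(x)$ is the set of $\sigma\in\Sigma$ with at least one vertex whose node lies in the subtree rooted at $x$. *)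

theory Defs
  imports Main
begin

text \<open>Simplices are finite nonempty vertex sets; a complex is a set of simplices.
  A tower starting at the empty complex is encoded by the list of its elementary maps.\<close>

datatype 'v tower_op = Incl "'v set" | Contr 'v 'v

text \<open>State after i maps: (K_i, hat K_i, set of active vertices).\<close>
type_synonym 'v tstate = "'v set set \<times> 'v set set \<times> 'v set"

definition act_star :: "'v set set \<Rightarrow> 'v set \<Rightarrow> 'v \<Rightarrow> 'v set set" where
  "act_star Kh A w = {\<tau> \<in> Kh. \<tau> \<subseteq> A \<and> (\<exists>\<sigma>\<in>Kh. w \<in> \<sigma> \<and> \<tau> \<subseteq> \<sigma>)}"

definition survivor :: "'v set set \<Rightarrow> 'v set \<Rightarrow> 'v \<Rightarrow> 'v \<Rightarrow> 'v" where
  "survivor Kh A u v = (if card (act_star Kh A u) \<le> card (act_star Kh A v) then v else u)"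

fun step :: "'v tower_op \<Rightarrow> 'v tstate \<Rightarrow> 'v tstate" where
  "step (Incl \<sigma>) (K, Kh, A) =
     (insert \<sigma> K, insert \<sigma> Kh, if card \<sigma> = 1 then A \<union> \<sigma> else A)"
| "step (Contr u v) (K, Kh, A) =
     (let s = survivor Kh A u v; d = (if s = v then u else v);
          \<phi> = (\<lambda>x. if x = d then s else x)
      in ((\<lambda>\<sigma>. \<phi> ` \<sigma>) ` K, Kh \<union> {insert s \<tau> | \<tau>. \<tau> \<in> act_star Kh A d}, A - {d}))"

definition tstate :: "'v tower_op list \<Rightarrow> nat \<Rightarrow> 'v tstate" where
  "tstate ops i = fold step (take i ops) ({}, {}, {})"

definition cK :: "'v tower_op list \<Rightarrow> nat \<Rightarrow> 'v set set" where
  "cK ops i = fst (tstate ops i)"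
definition cKhat :: "'v tower_op list \<Rightarrow> nat \<Rightarrow> 'v set set" where
  "cKhat ops i = fst (snd (tstate ops i))"
definition cAct :: "'v tower_op list \<Rightarrow> nat \<Rightarrow> 'v set" where
  "cAct ops i = snd (snd (tstate ops i))"

text \<open>Validity: every map is an elementary inclusion (of a simplex not yet present whose
  proper faces are present, so that K_{i+1} is a complex; new vertices get fresh names)
  or an elementary contraction of two distinct vertices of K_i.\<close>
definition valid_tower :: "'v tower_op list \<Rightarrow> bool" where
  "valid_tower ops \<longleftrightarrow> (\<forall>i<length ops. case ops ! i of
      Incl \<sigma> \<Rightarrow> finite \<sigma> \<and> \<sigma> \<noteq> {} \<and> \<sigma> \<notin> cK ops i
                 \<and> (\<forall>\<tau>. \<tau> \<subseteq> \<sigma> \<and> \<tau> \<noteq> {} \<and> \<tau> \<noteq> \<sigma> \<longrightarrow> \<tau> \<in> cK ops i)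
                 \<and> (\<forall>w. \<sigma> = {w} \<longrightarrow> w \<notin> \<Union> (cKhat ops i))
    | Contr u v \<Rightarrow> u \<noteq> v \<and> {u} \<in> cK ops i \<and> {v} \<in> cK ops i)"

text \<open>Contracting forest: nodes are identified with the index of the map creating them
  (vertex inclusions give leaves, contractions give internal nodes).\<close>
definition is_node :: "'v tower_op list \<Rightarrow> nat \<Rightarrow> bool" where
  "is_node ops j \<longleftrightarrow> j < length ops \<and>
     ((\<exists>w. ops ! j = Incl {w}) \<or> (\<exists>u v. ops ! j = Contr u v))"

definition node_label :: "'v tower_op list \<Rightarrow> nat \<Rightarrow> 'v" where
  "node_label ops j = (case ops ! j of
      Incl \<sigma> \<Rightarrow> the_elem \<sigma>
    | Contr u v \<Rightarrow> survivor (cKhat ops j) (cAct ops j) u v)"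

definition root_of :: "'v tower_op list \<Rightarrow> nat \<Rightarrow> 'v \<Rightarrow> nat" where
  "root_of ops i w = (GREATEST j. j < i \<and> is_node ops j \<and> node_label ops j = w)"

inductive in_subtree :: "'v tower_op list \<Rightarrow> nat \<Rightarrow> nat \<Rightarrow> bool" for ops where
  refl: "in_subtree ops x x"
| left: "x < length ops \<Longrightarrow> ops ! x = Contr u v \<Longrightarrow> in_subtree ops (root_of ops x u) y
          \<Longrightarrow> in_subtree ops x y"
| right: "x < length ops \<Longrightarrow> ops ! x = Contr u v \<Longrightarrow> in_subtree ops (root_of ops x v) y
          \<Longrightarrow> in_subtree ops x y"

text \<open>E(x), with the elements of Sigma indexed by the step at which they are included.\<close>
definition E_set :: "'v tower_op list \<Rightarrow> nat \<Rightarrow> nat set" where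
  "E_set ops x = {i. i < length ops \<and>
     (\<exists>\<sigma>. ops ! i = Incl \<sigma> \<and> (\<exists>a\<in>\<sigma>. in_subtree ops x (root_of ops (Suc i) a)))}"

definition cost :: "'v tower_op list \<Rightarrow> nat \<Rightarrow> nat" where
  "cost ops x = card (cKhat ops (Suc x) - cKhat ops x)"

end

theory Submission
  imports Defs
begin

text \<open>At the contraction x of u and v, with survivor s and removed vertex d, the new simplices
  of the active coning are the cones over the active part of the closed star of d, and each of
  them is \<open>{s} \<union> \<sigma>\<close> or \<open>{s} \<union> (\<sigma> - {d})\<close> for a simplex \<open>\<sigma>\<close> of \<open>K\<^sub>x\<close> containing d but not s.
  Because \<open>K\<^sub>x\<close> is exactly the active part of the coning, the active closed star of a vertex w
  has \<open>2 |{\<sigma> \<in> K\<^sub>x. w \<in> \<sigma>}| - 1\<close> elements, so the survivor rule makes the count for d the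
  smaller one: c(x) is at most twice the number of simplices of \<open>K\<^sub>x\<close> containing either
  vertex of the pair but not the other. Such a simplex is the image of an included simplex,
  and a vertex of that simplex lies below the root labelled w exactly when the tower maps it to
  w; so these simplices inject into \<open>E(y\<^sub>1) - E(y\<^sub>2)\<close>.\<close>

definition coning_inv :: "'v set set \<Rightarrow> 'v set set \<Rightarrow> 'v set \<Rightarrow> bool" where
  "coning_inv K Kh A \<longleftrightarrow> finite Kh \<and> {} \<notin> Kh \<and> K = {\<rho> \<in> Kh. \<rho> \<subseteq> A}
     \<and> (\<forall>\<rho>\<in>Kh. \<forall>\<tau>. \<tau> \<subseteq> \<rho> \<longrightarrow> \<tau> \<noteq> {} \<longrightarrow> \<tau> \<in> Kh) \<and> (\<forall>a\<in>A. {a} \<in> Kh)"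

lemma coning_invD:
  assumes "coning_inv K Kh A"
  shows "finite Kh" "\<rho> \<in> Kh \<Longrightarrow> \<rho> \<noteq> {}" "K = {\<rho> \<in> Kh. \<rho> \<subseteq> A}"
    "\<rho> \<in> Kh \<Longrightarrow> \<tau> \<subseteq> \<rho> \<Longrightarrow> \<tau> \<noteq> {} \<Longrightarrow> \<tau> \<in> Kh" "a \<in> A \<Longrightarrow> {a} \<in> Kh"
  using assms unfolding coning_inv_def by blast+

lemma coning_inv_finite_K: "coning_inv K Kh A \<Longrightarrow> finite K"
  using coning_invD(1,3) by (metis (no_types, lifting) finite_subset mem_Collect_eq subsetI)

lemma coning_inv_active_iff: "coning_inv K Kh A \<Longrightarrow> a \<in> A \<longleftrightarrow> {a} \<in> K"
  using coning_invD(3,5) by fastforce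

lemma coning_inv_insert_face:
  assumes "coning_inv K Kh A" "\<tau> \<in> K" "\<sigma> \<in> Kh" "w \<in> \<sigma>" "\<tau> \<subseteq> \<sigma>" "w \<in> A"
  shows "insert w \<tau> \<in> K"
proof -
  have "insert w \<tau> \<in> Kh" by (rule coning_invD(4)[OF assms(1) assms(3)]) (use assms(4,5) in auto)
  then show ?thesis using assms(2,6) unfolding coning_invD(3)[OF assms(1)] by simp
qed

lemma coning_inv_incl:
  assumes inv: "coning_inv K Kh A" and "\<sigma> \<noteq> {}"
    and faces: "\<forall>\<tau>. \<tau> \<subseteq> \<sigma> \<and> \<tau> \<noteq> {} \<and> \<tau> \<noteq> \<sigma> \<longrightarrow> \<tau> \<in> K"
    and fresh: "\<forall>w. \<sigma> = {w} \<longrightarrow> w \<notin> \<Union> Kh"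
  shows "coning_inv (insert \<sigma> K) (insert \<sigma> Kh) (if \<exists>w. \<sigma> = {w} then A \<union> \<sigma> else A)"
proof -
  note K_eq = coning_invD(3)[OF inv]
  have closed: "\<tau> \<in> insert \<sigma> Kh" if "\<rho> \<in> insert \<sigma> Kh" "\<tau> \<subseteq> \<rho>" "\<tau> \<noteq> {}" for \<rho> \<tau>
    using that faces coning_invD(4)[OF inv] unfolding K_eq by blast
  show ?thesis
  proof (cases "\<exists>w. \<sigma> = {w}")
    case True
    then obtain w where w: "\<sigma> = {w}" by blast
    with fresh have "\<rho> \<subseteq> A \<union> \<sigma> \<longleftrightarrow> \<rho> \<subseteq> A" if "\<rho> \<in> Kh" for \<rho>
      using that by blast
    then have "insert \<sigma> K = {\<rho> \<in> insert \<sigma> Kh. \<rho> \<subseteq> A \<union> \<sigma>}"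
      unfolding K_eq by auto
    with inv True w closed \<open>\<sigma> \<noteq> {}\<close> show ?thesis
      unfolding coning_inv_def by simp
  next
    case False
    have "{a} \<in> K" if "a \<in> \<sigma>" for a
    proof -
      have "{a} \<noteq> \<sigma>" using False by auto
      then show ?thesis using faces that by simp
    qed
    then have "\<sigma> \<subseteq> A" unfolding K_eq by blast
    then have "insert \<sigma> K = {\<rho> \<in> insert \<sigma> Kh. \<rho> \<subseteq> A}"
      unfolding K_eq by auto
    with inv False closed \<open>\<sigma> \<noteq> {}\<close> show ?thesis
      unfolding coning_inv_def by simp
  qed
qed

lemma image_rename_vertex:
  "(\<lambda>z. if z = d then s else z) ` \<sigma> = (if d \<in> \<sigma> then insert s (\<sigma> - {d}) else \<sigma>)"
  by auto

lemma act_star_face: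
  assumes "coning_inv K Kh A" "\<tau> \<in> act_star Kh A w" "\<zeta> \<subseteq> \<tau>" "\<zeta> \<noteq> {}"
  shows "\<zeta> \<in> act_star Kh A w"
proof -
  have "\<tau> \<in> Kh" using assms(2) by (simp add: act_star_def)
  then have "\<zeta> \<in> Kh" using coning_invD(4)[OF assms(1)] assms(3,4) by simp
  with assms(2,3) show ?thesis unfolding act_star_def by blast
qed

lemma act_star_subset_K:
  assumes "coning_inv K Kh A" shows "act_star Kh A w \<subseteq> K"
  unfolding coning_invD(3)[OF assms] act_star_def by auto

lemma cone_union_closed:
  assumes inv: "coning_inv K Kh A" and "s \<in> A"
    and "\<rho> \<in> Kh \<union> insert s ` act_star Kh A d" "\<zeta> \<subseteq> \<rho>" "\<zeta> \<noteq> {}"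
  shows "\<zeta> \<in> Kh \<union> insert s ` act_star Kh A d"
proof (cases "\<rho> \<in> Kh")
  case True
  then show ?thesis using coning_invD(4)[OF inv True assms(4,5)] by simp
next
  case False
  with assms(3) have "\<rho> \<in> insert s ` act_star Kh A d" by simp
  then obtain \<tau> where \<tau>: "\<rho> = insert s \<tau>" "\<tau> \<in> act_star Kh A d" by (rule imageE)
  then have "\<tau> \<in> Kh" by (simp add: act_star_def)
  consider "s \<notin> \<zeta>" | "\<zeta> = {s}" | "s \<in> \<zeta>" "\<zeta> - {s} \<noteq> {}" by auto
  then show ?thesis
  proof cases
    case 1
    then have "\<zeta> \<subseteq> \<tau>" using assms(4) \<tau>(1) by blast
    then show ?thesis using coning_invD(4)[OF inv \<open>\<tau> \<in> Kh\<close> _ assms(5)] by simp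
  next
    case 2
    then show ?thesis using coning_invD(5)[OF inv \<open>s \<in> A\<close>] by simp
  next
    case 3
    have "\<zeta> - {s} \<in> act_star Kh A d"
      by (rule act_star_face[OF inv \<tau>(2)]) (use 3 assms(4) \<tau>(1) in auto)
    moreover have "\<zeta> = insert s (\<zeta> - {s})" using 3 by auto
    ultimately show ?thesis by (metis UnI2 image_eqI)
  qed
qed

lemma image_rename_vertex_eq_active_part:
  assumes inv: "coning_inv K Kh A" and "s \<noteq> d" "s \<in> A" "d \<in> A"
  defines "\<phi> \<equiv> \<lambda>z. if z = d then s else z"
  shows "(\<lambda>\<sigma>. \<phi> ` \<sigma>) ` K = {\<rho> \<in> Kh \<union> insert s ` act_star Kh A d. \<rho> \<subseteq> A - {d}}"
proof (intro equalityI subsetI)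
  note K_eq = coning_invD(3)[OF inv]
  fix \<rho> assume "\<rho> \<in> (\<lambda>\<sigma>. \<phi> ` \<sigma>) ` K"
  then obtain \<sigma> where "\<rho> = \<phi> ` \<sigma>" "\<sigma> \<in> K" by (rule imageE)
  then have \<sigma>: "\<sigma> \<in> Kh" "\<sigma> \<subseteq> A" unfolding K_eq by auto
  have "\<rho> \<in> Kh \<union> insert s ` act_star Kh A d"
  proof (cases "d \<in> \<sigma> \<and> \<sigma> \<noteq> {d}")
    case True
    then have "\<sigma> - {d} \<noteq> {}" by auto
    then have "\<sigma> - {d} \<in> Kh" using coning_invD(4)[OF inv \<sigma>(1)] by simp
    then have "\<sigma> - {d} \<in> act_star Kh A d" using True \<sigma> unfolding act_star_def by auto
    then show ?thesis using True unfolding \<open>\<rho> = \<phi> ` \<sigma>\<close> \<phi>_def image_rename_vertex by auto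
  next
    case False
    then show ?thesis
      using \<sigma>(1) coning_invD(5)[OF inv \<open>s \<in> A\<close>] unfolding \<open>\<rho> = \<phi> ` \<sigma>\<close> \<phi>_def image_rename_vertex
      by auto
  qed
  moreover have "\<rho> \<subseteq> A - {d}" using \<sigma>(2) \<open>s \<noteq> d\<close> \<open>s \<in> A\<close> unfolding \<open>\<rho> = \<phi> ` \<sigma>\<close> \<phi>_def by auto
  ultimately show "\<rho> \<in> {\<rho> \<in> Kh \<union> insert s ` act_star Kh A d. \<rho> \<subseteq> A - {d}}" by simp
next
  note K_eq = coning_invD(3)[OF inv]
  fix \<rho> assume \<rho>: "\<rho> \<in> {\<rho> \<in> Kh \<union> insert s ` act_star Kh A d. \<rho> \<subseteq> A - {d}}"
  show "\<rho> \<in> (\<lambda>\<sigma>. \<phi> ` \<sigma>) ` K"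
  proof (cases "\<rho> \<in> Kh")
    case True
    with \<rho> have "\<rho> \<in> K" "d \<notin> \<rho>" unfolding K_eq by auto
    moreover from \<open>d \<notin> \<rho>\<close> have "\<phi> ` \<rho> = \<rho>" unfolding \<phi>_def image_rename_vertex by simp
    ultimately show ?thesis by (metis image_eqI)
  next
    case False
    with \<rho> have "\<rho> \<in> insert s ` act_star Kh A d" by simp
    then obtain \<tau> where \<tau>: "\<rho> = insert s \<tau>" "\<tau> \<in> act_star Kh A d" by (rule imageE)
    then obtain \<sigma> where \<sigma>: "\<sigma> \<in> Kh" "d \<in> \<sigma>" "\<tau> \<subseteq> \<sigma>" unfolding act_star_def by blast
    have "\<tau> \<in> K" using \<tau>(2) act_star_subset_K[OF inv] by blast
    have "insert d \<tau> \<in> K" by (rule coning_inv_insert_face[OF inv \<open>\<tau> \<in> K\<close> \<sigma> \<open>d \<in> A\<close>])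
    moreover have "d \<notin> \<tau>" using \<rho> \<tau>(1) by blast
    moreover from \<open>d \<notin> \<tau>\<close> have "\<phi> ` insert d \<tau> = \<rho>"
      unfolding \<tau>(1) \<phi>_def image_rename_vertex by simp
    ultimately show ?thesis by (metis image_eqI)
  qed
qed

lemma coning_inv_contr:
  assumes inv: "coning_inv K Kh A" and "s \<noteq> d" "s \<in> A" "d \<in> A"
  shows "coning_inv ((\<lambda>\<sigma>. (\<lambda>z. if z = d then s else z) ` \<sigma>) ` K)
           (Kh \<union> insert s ` act_star Kh A d) (A - {d})"
proof -
  have "finite (insert s ` act_star Kh A d)"
    using finite_subset[OF act_star_subset_K[OF inv] coning_inv_finite_K[OF inv]] by simp
  moreover have "{} \<notin> insert s ` act_star Kh A d" by auto
  ultimately show ?thesis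
    using inv cone_union_closed[OF inv \<open>s \<in> A\<close>] image_rename_vertex_eq_active_part[OF assms]
    unfolding coning_inv_def by simp
qed

lemma card_cone_new_le:
  assumes inv: "coning_inv K Kh A" and "s \<noteq> d" "d \<in> A"
  shows "card ((Kh \<union> insert s ` act_star Kh A d) - Kh) \<le> 2 * card {\<rho> \<in> K. d \<in> \<rho> \<and> s \<notin> \<rho>}"
proof -
  define D where "D = {\<rho> \<in> K. d \<in> \<rho> \<and> s \<notin> \<rho>}"
  have "finite D" using coning_inv_finite_K[OF inv] unfolding D_def by simp
  have "(Kh \<union> insert s ` act_star Kh A d) - Kh \<subseteq> insert s ` D \<union> (\<lambda>\<rho>. insert s (\<rho> - {d})) ` D"
  proof
    fix c assume c: "c \<in> (Kh \<union> insert s ` act_star Kh A d) - Kh"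
    then obtain \<tau> where \<tau>: "c = insert s \<tau>" "\<tau> \<in> act_star Kh A d" by blast
    then obtain \<sigma> where \<sigma>: "\<sigma> \<in> Kh" "d \<in> \<sigma>" "\<tau> \<subseteq> \<sigma>" unfolding act_star_def by blast
    have "\<tau> \<in> K" using \<tau>(2) act_star_subset_K[OF inv] by blast
    have "s \<notin> \<tau>" using c \<tau>(1) \<open>\<tau> \<in> K\<close> coning_invD(3)[OF inv] by (auto simp: insert_absorb)
    show "c \<in> insert s ` D \<union> (\<lambda>\<rho>. insert s (\<rho> - {d})) ` D"
    proof (cases "d \<in> \<tau>")
      case True
      then have "\<tau> \<in> D" using \<open>\<tau> \<in> K\<close> \<open>s \<notin> \<tau>\<close> unfolding D_def by simp
      then show ?thesis using \<tau>(1) by blast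
    next
      case False
      have "insert d \<tau> \<in> K" by (rule coning_inv_insert_face[OF inv \<open>\<tau> \<in> K\<close> \<sigma> \<open>d \<in> A\<close>])
      then have "insert d \<tau> \<in> D" using \<open>s \<notin> \<tau>\<close> \<open>s \<noteq> d\<close> unfolding D_def by simp
      moreover have "c = insert s (insert d \<tau> - {d})" using False \<tau>(1) by simp
      ultimately show ?thesis by blast
    qed
  qed
  then have "card ((Kh \<union> insert s ` act_star Kh A d) - Kh)
      \<le> card (insert s ` D \<union> (\<lambda>\<rho>. insert s (\<rho> - {d})) ` D)"
    using \<open>finite D\<close> by (intro card_mono) auto
  also have "\<dots> \<le> card (insert s ` D) + card ((\<lambda>\<rho>. insert s (\<rho> - {d})) ` D)"
    by (rule card_Un_le)
  also have "\<dots> \<le> 2 * card D"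
    using card_image_le[OF \<open>finite D\<close>] by (metis add_mono mult_2)
  finally show ?thesis unfolding D_def .
qed

lemma act_star_eq:
  assumes inv: "coning_inv K Kh A" and "w \<in> A"
  defines "S \<equiv> {\<rho> \<in> K. w \<in> \<rho>}"
  shows "act_star Kh A w = S \<union> (\<lambda>\<rho>. \<rho> - {w}) ` (S - {{w}})"
proof (intro equalityI subsetI)
  fix \<tau> assume "\<tau> \<in> act_star Kh A w"
  then obtain \<sigma> where \<sigma>: "\<sigma> \<in> Kh" "w \<in> \<sigma>" "\<tau> \<subseteq> \<sigma>" unfolding act_star_def by blast
  have "\<tau> \<in> K" using \<open>\<tau> \<in> act_star Kh A w\<close> act_star_subset_K[OF inv] by blast
  show "\<tau> \<in> S \<union> (\<lambda>\<rho>. \<rho> - {w}) ` (S - {{w}})"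
  proof (cases "w \<in> \<tau>")
    case True
    then show ?thesis using \<open>\<tau> \<in> K\<close> unfolding S_def by simp
  next
    case False
    have "insert w \<tau> \<in> K" by (rule coning_inv_insert_face[OF inv \<open>\<tau> \<in> K\<close> \<sigma> \<open>w \<in> A\<close>])
    moreover have "\<tau> \<noteq> {}" using \<open>\<tau> \<in> K\<close> coning_invD(2,3)[OF inv] by auto
    ultimately have "insert w \<tau> \<in> S - {{w}}" unfolding S_def using False by auto
    moreover have "\<tau> = insert w \<tau> - {w}" using False by simp
    ultimately show ?thesis by (metis UnI2 image_eqI)
  qed
next
  fix \<tau> assume "\<tau> \<in> S \<union> (\<lambda>\<rho>. \<rho> - {w}) ` (S - {{w}})"
  then obtain \<rho> where \<rho>: "\<rho> \<in> K" "w \<in> \<rho>" and "\<tau> = \<rho> \<or> \<tau> = \<rho> - {w} \<and> \<tau> \<noteq> {}"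
    unfolding S_def by auto
  moreover have "\<rho> \<in> Kh" "\<rho> \<subseteq> A" using \<rho>(1) coning_invD(3)[OF inv] by auto
  moreover have "\<rho> - {w} \<noteq> {} \<Longrightarrow> \<rho> - {w} \<in> Kh" using coning_invD(4)[OF inv \<open>\<rho> \<in> Kh\<close>] by simp
  ultimately show "\<tau> \<in> act_star Kh A w" unfolding act_star_def by auto
qed

lemma card_act_star:
  assumes inv: "coning_inv K Kh A" and "w \<in> A"
  shows "card (act_star Kh A w) + 1 = 2 * card {\<rho> \<in> K. w \<in> \<rho>}"
proof -
  define S where "S = {\<rho> \<in> K. w \<in> \<rho>}"
  have "finite S" using coning_inv_finite_K[OF inv] unfolding S_def by simp
  have "{w} \<in> S" using \<open>w \<in> A\<close> coning_inv_active_iff[OF inv] unfolding S_def by simp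
  have "inj_on (\<lambda>\<rho>. \<rho> - {w}) (S - {{w}})"
    by (rule inj_onI) (auto simp: S_def insert_Diff[symmetric])
  moreover have "S \<inter> (\<lambda>\<rho>. \<rho> - {w}) ` (S - {{w}}) = {}" unfolding S_def by auto
  ultimately have "card (act_star Kh A w) = card S + (card S - 1)"
    unfolding act_star_eq[OF inv \<open>w \<in> A\<close>, folded S_def]
    using \<open>finite S\<close> \<open>{w} \<in> S\<close> by (simp add: card_Un_disjoint card_image)
  moreover have "card S \<ge> 1" using \<open>finite S\<close> \<open>{w} \<in> S\<close> card_0_eq by fastforce
  ultimately show ?thesis unfolding S_def by simp
qed

lemma card_star_without_le:
  assumes inv: "coning_inv K Kh A" and "s \<in> A" "d \<in> A"
    and "card (act_star Kh A d) \<le> card (act_star Kh A s)"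
  shows "card {\<rho> \<in> K. d \<in> \<rho> \<and> s \<notin> \<rho>} \<le> card {\<rho> \<in> K. s \<in> \<rho> \<and> d \<notin> \<rho>}"
proof -
  have "finite K" by (rule coning_inv_finite_K[OF inv])
  have split: "card {\<rho> \<in> K. a \<in> \<rho>} = card {\<rho> \<in> K. a \<in> \<rho> \<and> b \<notin> \<rho>} + card {\<rho> \<in> K. a \<in> \<rho> \<and> b \<in> \<rho>}"
    for a b
  proof -
    have "{\<rho> \<in> K. a \<in> \<rho>} = {\<rho> \<in> K. a \<in> \<rho> \<and> b \<notin> \<rho>} \<union> {\<rho> \<in> K. a \<in> \<rho> \<and> b \<in> \<rho>}" by auto
    then show ?thesis using \<open>finite K\<close> by (simp add: card_Un_disjoint disjoint_iff)
  qed
  have "card {\<rho> \<in> K. d \<in> \<rho>} \<le> card {\<rho> \<in> K. s \<in> \<rho>}"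
    using card_act_star[OF inv \<open>s \<in> A\<close>] card_act_star[OF inv \<open>d \<in> A\<close>] assms(4) by linarith
  moreover have "card {\<rho> \<in> K. d \<in> \<rho> \<and> s \<in> \<rho>} = card {\<rho> \<in> K. s \<in> \<rho> \<and> d \<in> \<rho>}"
    by metis
  ultimately show ?thesis using split[of d s] split[of s d] by linarith
qed

definition survivor_at :: "'v tower_op list \<Rightarrow> nat \<Rightarrow> 'v \<Rightarrow> 'v \<Rightarrow> 'v" where
  "survivor_at ops i u v = survivor (cKhat ops i) (cAct ops i) u v"

definition removed_at :: "'v tower_op list \<Rightarrow> nat \<Rightarrow> 'v \<Rightarrow> 'v \<Rightarrow> 'v" where
  "removed_at ops i u v = (if survivor_at ops i u v = v then u else v)"

definition vertex_map :: "'v tower_op list \<Rightarrow> nat \<Rightarrow> 'v \<Rightarrow> 'v" where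
  "vertex_map ops i = (case ops ! i of
      Incl _ \<Rightarrow> id
    | Contr u v \<Rightarrow> (\<lambda>z. if z = removed_at ops i u v then survivor_at ops i u v else z))"

lemma survivor_removed_at:
  "survivor_at ops i u v = v \<and> removed_at ops i u v = u \<or>
   survivor_at ops i u v = u \<and> removed_at ops i u v = v"
  by (auto simp: survivor_at_def removed_at_def survivor_def)

lemma card_act_star_removed_le:
  "card (act_star (cKhat ops i) (cAct ops i) (removed_at ops i u v))
     \<le> card (act_star (cKhat ops i) (cAct ops i) (survivor_at ops i u v))"
  by (auto simp: removed_at_def survivor_at_def survivor_def)

lemma tstate_Suc:
  "i < length ops \<Longrightarrow> tstate ops (Suc i) = step (ops ! i) (cK ops i, cKhat ops i, cAct ops i)"
  by (simp add: tstate_def take_Suc_conv_app_nth cK_def cKhat_def cAct_def)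

lemma step_Incl:
  assumes "i < length ops" "ops ! i = Incl \<sigma>"
  shows "cK ops (Suc i) = insert \<sigma> (cK ops i)"
    "cKhat ops (Suc i) = insert \<sigma> (cKhat ops i)"
    "cAct ops (Suc i) = (if \<exists>w. \<sigma> = {w} then cAct ops i \<union> \<sigma> else cAct ops i)"
    "vertex_map ops i = id"
  using assms
  by (simp_all add: cK_def[of ops "Suc i"] cKhat_def[of ops "Suc i"] cAct_def[of ops "Suc i"]
      tstate_Suc vertex_map_def card_1_singleton_iff)

lemma step_Contr:
  assumes "i < length ops" "ops ! i = Contr u v"
  defines "s \<equiv> survivor_at ops i u v" and "d \<equiv> removed_at ops i u v"
  shows "cK ops (Suc i) = (\<lambda>\<sigma>. vertex_map ops i ` \<sigma>) ` cK ops i"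
    "cKhat ops (Suc i) = cKhat ops i \<union> insert s ` act_star (cKhat ops i) (cAct ops i) d"
    "cAct ops (Suc i) = cAct ops i - {d}"
    "vertex_map ops i = (\<lambda>z. if z = d then s else z)"
  using assms(1,2) unfolding s_def d_def
  by (simp_all add: cK_def[of ops "Suc i"] cKhat_def[of ops "Suc i"] cAct_def[of ops "Suc i"]
      tstate_Suc vertex_map_def survivor_at_def removed_at_def
      Let_def setcompr_eq_image)

lemma valid_towerD_Incl:
  assumes "valid_tower ops" "i < length ops" "ops ! i = Incl \<sigma>"
  shows "\<sigma> \<noteq> {}" "\<forall>\<tau>. \<tau> \<subseteq> \<sigma> \<and> \<tau> \<noteq> {} \<and> \<tau> \<noteq> \<sigma> \<longrightarrow> \<tau> \<in> cK ops i"
    "\<forall>w. \<sigma> = {w} \<longrightarrow> w \<notin> \<Union> (cKhat ops i)"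
  using assms(1)[unfolded valid_tower_def, rule_format, OF assms(2)] assms(3) by simp_all

lemma valid_towerD_Contr:
  assumes "valid_tower ops" "i < length ops" "ops ! i = Contr u v"
  shows "u \<noteq> v" "{u} \<in> cK ops i" "{v} \<in> cK ops i"
  using assms(1)[unfolded valid_tower_def, rule_format, OF assms(2)] assms(3) by simp_all

lemma coning_inv_tstate:
  assumes "valid_tower ops" "i \<le> length ops"
  shows "coning_inv (cK ops i) (cKhat ops i) (cAct ops i)"
  using assms(2)
proof (induction i)
  case 0
  show ?case by (simp add: coning_inv_def cK_def cKhat_def cAct_def tstate_def)
next
  case (Suc i)
  then have i: "i < length ops" and inv: "coning_inv (cK ops i) (cKhat ops i) (cAct ops i)"
    by simp_all
  show ?case
  proof (cases "ops ! i")
    case (Incl \<sigma>)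
    show ?thesis
      unfolding step_Incl[OF i Incl]
      by (rule coning_inv_incl[OF inv valid_towerD_Incl[OF assms(1) i Incl]])
  next
    case (Contr u v)
    have "u \<noteq> v" "u \<in> cAct ops i" "v \<in> cAct ops i"
      using valid_towerD_Contr[OF assms(1) i Contr] coning_inv_active_iff[OF inv] by simp_all
    then have "survivor_at ops i u v \<noteq> removed_at ops i u v"
      "survivor_at ops i u v \<in> cAct ops i" "removed_at ops i u v \<in> cAct ops i"
      using survivor_removed_at[of ops i u v] by auto
    then show ?thesis
      unfolding step_Contr[OF i Contr] by (rule coning_inv_contr[OF inv])
  qed
qed

lemma Contr_active:
  assumes "valid_tower ops" "i < length ops" "ops ! i = Contr u v"
  shows "u \<noteq> v" "u \<in> cAct ops i" "v \<in> cAct ops i"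
  using valid_towerD_Contr[OF assms] coning_inv_active_iff[OF coning_inv_tstate[OF assms(1)]] assms(2)
  by simp_all

lemma Incl_vertex_fresh:
  assumes "valid_tower ops" "i < length ops" "ops ! i = Incl {w}"
  shows "w \<notin> cAct ops i"
proof
  assume "w \<in> cAct ops i"
  then have "{w} \<in> cKhat ops i"
    using coning_invD(5)[OF coning_inv_tstate[OF assms(1)]] assms(2) by simp
  then show False using valid_towerD_Incl(3)[OF assms] by blast
qed

lemma contraction_cost_le:
  assumes "valid_tower ops" "x < length ops" "ops ! x = Contr u v"
    and "a = u \<and> b = v \<or> a = v \<and> b = u"
  shows "cost ops x \<le> 2 * card {\<rho> \<in> cK ops x. a \<in> \<rho> \<and> b \<notin> \<rho>}"
proof -
  define s where "s = survivor_at ops x u v"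
  define d where "d = removed_at ops x u v"
  note inv = coning_inv_tstate[OF assms(1) less_imp_le[OF assms(2)]]
  have sd: "s = v \<and> d = u \<or> s = u \<and> d = v"
    unfolding s_def d_def by (rule survivor_removed_at)
  then have "s \<noteq> d" "s \<in> cAct ops x" "d \<in> cAct ops x"
    using Contr_active[OF assms(1-3)] by auto
  have "cost ops x \<le> 2 * card {\<rho> \<in> cK ops x. d \<in> \<rho> \<and> s \<notin> \<rho>}"
    unfolding cost_def step_Contr(2)[OF assms(2,3)] s_def[symmetric] d_def[symmetric]
    by (rule card_cone_new_le[OF inv \<open>s \<noteq> d\<close> \<open>d \<in> cAct ops x\<close>])
  moreover have "card (act_star (cKhat ops x) (cAct ops x) d) \<le> card (act_star (cKhat ops x) (cAct ops x) s)"
    unfolding s_def d_def by (rule card_act_star_removed_le)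
  then have "card {\<rho> \<in> cK ops x. d \<in> \<rho> \<and> s \<notin> \<rho>} \<le> card {\<rho> \<in> cK ops x. s \<in> \<rho> \<and> d \<notin> \<rho>}"
    by (rule card_star_without_le[OF inv \<open>s \<in> cAct ops x\<close> \<open>d \<in> cAct ops x\<close>])
  moreover have "a = d \<and> b = s \<or> a = s \<and> b = d" using sd assms(4) by auto
  ultimately show ?thesis by auto
qed

lemma Greatest_less_Suc:
  "(GREATEST k::nat. k < Suc j \<and> P k) = (if P j then j else (GREATEST k. k < j \<and> P k))"
proof (cases "P j")
  case True
  then show ?thesis by (auto intro!: Greatest_equality)
next
  case False
  then have "(\<lambda>k. k < Suc j \<and> P k) = (\<lambda>k. k < j \<and> P k)" by (auto simp: less_Suc_eq fun_eq_iff)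
  then show ?thesis using False by simp
qed

lemma root_of_Suc:
  "root_of ops (Suc j) w = (if is_node ops j \<and> node_label ops j = w then j else root_of ops j w)"
  unfolding root_of_def by (rule Greatest_less_Suc)

lemma root_of_Suc_Incl:
  assumes "j < length ops" "ops ! j = Incl \<sigma>"
  shows "root_of ops (Suc j) w = (if \<sigma> = {w} then j else root_of ops j w)"
  using assms by (auto simp: root_of_Suc is_node_def node_label_def)

lemma root_of_Suc_Contr:
  assumes "j < length ops" "ops ! j = Contr u v"
  shows "root_of ops (Suc j) w = (if w = survivor_at ops j u v then j else root_of ops j w)"
  using assms by (auto simp: root_of_Suc is_node_def node_label_def survivor_at_def)

lemma cAct_0: "cAct ops 0 = {}"
  by (simp add: cAct_def tstate_def)

lemma cAct_Suc_cases:
  assumes "j < length ops" "w \<in> cAct ops (Suc j)"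
  shows "w \<in> cAct ops j \<or> is_node ops j \<and> node_label ops j = w"
proof (cases "ops ! j")
  case (Incl \<sigma>)
  then show ?thesis
    using assms step_Incl(3)[OF assms(1) Incl] by (auto simp: is_node_def node_label_def split: if_splits)
next
  case (Contr u v)
  then show ?thesis using assms step_Contr(3)[OF assms(1) Contr] by simp
qed

lemma root_of_less:
  assumes "t \<le> length ops" "a \<in> cAct ops t"
  shows "root_of ops t a < t"
  using assms
proof (induction t)
  case 0
  then show ?case by (simp add: cAct_0)
next
  case (Suc t)
  then show ?case using cAct_Suc_cases[of t ops a] by (auto simp: root_of_Suc)
qed

lemma in_subtree_le:
  assumes "valid_tower ops" "in_subtree ops z y"
  shows "y \<le> z"
  using assms(2)
proof (induction rule: in_subtree.induct)
  case (left x u v y)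
  then show ?case using root_of_less[of x ops u] Contr_active[OF assms(1) left(1,2)] by simp
next
  case (right x u v y)
  then show ?case using root_of_less[of x ops v] Contr_active[OF assms(1) right(1,2)] by simp
qed simp

lemma in_subtree_Incl:
  assumes "ops ! z = Incl \<sigma>"
  shows "in_subtree ops z y \<longleftrightarrow> y = z"
  using assms by (auto elim: in_subtree.cases intro: in_subtree.refl)

lemma in_subtree_Contr:
  assumes "z < length ops" "ops ! z = Contr u v"
  shows "in_subtree ops z y \<longleftrightarrow>
    y = z \<or> in_subtree ops (root_of ops z u) y \<or> in_subtree ops (root_of ops z v) y"
  using assms by (auto elim: in_subtree.cases intro: in_subtree.intros)

fun tower_map :: "'v tower_op list \<Rightarrow> nat \<Rightarrow> nat \<Rightarrow> 'v \<Rightarrow> 'v" where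
  "tower_map ops t 0 = id"
| "tower_map ops t (Suc j) = (if t \<le> j then vertex_map ops j \<circ> tower_map ops t j else id)"

lemma tower_map_same [simp]: "tower_map ops t t = id"
  by (cases t) auto

lemma tower_map_active:
  assumes "valid_tower ops" "t \<le> j" "j \<le> length ops" "a \<in> cAct ops t"
  shows "tower_map ops t j a \<in> cAct ops j"
  using assms(2,3)
proof (induction j rule: dec_induct)
  case base
  then show ?case using assms(4) by simp
next
  case (step n)
  then have n: "n < length ops" and IH: "tower_map ops t n a \<in> cAct ops n" by simp_all
  show ?case
  proof (cases "ops ! n")
    case (Incl \<sigma>)
    then show ?thesis using IH step_Incl[OF n Incl] step(1) by auto
  next
    case (Contr u v)
    have "survivor_at ops n u v \<in> cAct ops n" "removed_at ops n u v \<noteq> survivor_at ops n u v"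
      using survivor_removed_at[of ops n u v] Contr_active[OF assms(1) n Contr] by auto
    then show ?thesis using IH step_Contr(3,4)[OF n Contr] step(1) by auto
  qed
qed

lemma vertex_map_fixes_active:
  assumes "j < length ops" "a \<in> cAct ops (Suc j)"
  shows "vertex_map ops j a = a"
proof (cases "ops ! j")
  case (Incl \<sigma>)
  then show ?thesis using step_Incl(4)[OF assms(1)] by simp
next
  case (Contr u v)
  then show ?thesis using assms(2) step_Contr(3,4)[OF assms(1)] by simp
qed

lemma in_subtree_root_step_Incl:
  assumes V: "valid_tower ops" and n: "n < length ops" and Incl: "ops ! n = Incl \<sigma>"
    and "t \<le> n" "root_of ops t a \<noteq> n" "tower_map ops t n a \<in> cAct ops n"
    and IH: "\<And>w. w \<in> cAct ops n \<Longrightarrow>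
      in_subtree ops (root_of ops n w) (root_of ops t a) \<longleftrightarrow> tower_map ops t n a = w"
    and w: "w \<in> cAct ops (Suc n)"
  shows "in_subtree ops (root_of ops (Suc n) w) (root_of ops t a) \<longleftrightarrow> tower_map ops t (Suc n) a = w"
proof -
  have map: "tower_map ops t (Suc n) a = tower_map ops t n a"
    using step_Incl(4)[OF n Incl] \<open>t \<le> n\<close> by simp
  show ?thesis
  proof (cases "\<sigma> = {w}")
    case True
    have "w \<notin> cAct ops n" using Incl_vertex_fresh[OF V n] Incl True by simp
    then show ?thesis using True map assms(5,6)
      by (auto simp: root_of_Suc_Incl[OF n Incl] in_subtree_Incl[OF Incl])
  next
    case False
    then have "w \<in> cAct ops n" using w step_Incl(3)[OF n Incl] by (auto split: if_splits)
    then show ?thesis using IH False map by (simp add: root_of_Suc_Incl[OF n Incl])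
  qed
qed

lemma in_subtree_root_step_Contr:
  assumes V: "valid_tower ops" and n: "n < length ops" and Contr: "ops ! n = Contr u v"
    and "t \<le> n" "root_of ops t a \<noteq> n"
    and IH: "\<And>w. w \<in> cAct ops n \<Longrightarrow>
      in_subtree ops (root_of ops n w) (root_of ops t a) \<longleftrightarrow> tower_map ops t n a = w"
    and w: "w \<in> cAct ops (Suc n)"
  shows "in_subtree ops (root_of ops (Suc n) w) (root_of ops t a) \<longleftrightarrow> tower_map ops t (Suc n) a = w"
proof -
  define s where "s = survivor_at ops n u v"
  define d where "d = removed_at ops n u v"
  have sd: "s = v \<and> d = u \<or> s = u \<and> d = v"
    unfolding s_def d_def by (rule survivor_removed_at)
  have map: "tower_map ops t (Suc n) a = (if tower_map ops t n a = d then s else tower_map ops t n a)"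
    using step_Contr(4)[OF n Contr] \<open>t \<le> n\<close> unfolding s_def d_def by simp
  have "w \<in> cAct ops n" "w \<noteq> d" using w step_Contr(3)[OF n Contr] unfolding d_def by simp_all
  show ?thesis
  proof (cases "w = s")
    case True
    have "in_subtree ops n (root_of ops t a) \<longleftrightarrow>
        in_subtree ops (root_of ops n u) (root_of ops t a) \<or> in_subtree ops (root_of ops n v) (root_of ops t a)"
      using in_subtree_Contr[OF n Contr] \<open>root_of ops t a \<noteq> n\<close> by simp
    also have "\<dots> \<longleftrightarrow> tower_map ops t n a = u \<or> tower_map ops t n a = v"
      using IH Contr_active[OF V n Contr] by simp
    also have "\<dots> \<longleftrightarrow> tower_map ops t (Suc n) a = w"
      using map True sd by auto
    finally show ?thesis
      using True root_of_Suc_Contr[OF n Contr] unfolding s_def by simp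
  next
    case False
    then have "tower_map ops t (Suc n) a = w \<longleftrightarrow> tower_map ops t n a = w"
      using map \<open>w \<noteq> d\<close> by auto
    then show ?thesis using IH[OF \<open>w \<in> cAct ops n\<close>] False
      by (simp add: root_of_Suc_Contr[OF n Contr] s_def)
  qed
qed

lemma in_subtree_root_step:
  assumes V: "valid_tower ops" and "t \<le> n" "n < length ops" "a \<in> cAct ops t"
    and IH: "\<And>w. w \<in> cAct ops n \<Longrightarrow>
      in_subtree ops (root_of ops n w) (root_of ops t a) \<longleftrightarrow> tower_map ops t n a = w"
    and "w \<in> cAct ops (Suc n)"
  shows "in_subtree ops (root_of ops (Suc n) w) (root_of ops t a) \<longleftrightarrow> tower_map ops t (Suc n) a = w"
proof -
  have "root_of ops t a \<noteq> n" using root_of_less[of t ops a] assms(2-4) by simp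
  have "tower_map ops t n a \<in> cAct ops n"
    using tower_map_active[OF V assms(2) _ assms(4)] assms(3) by simp
  show ?thesis
  proof (cases "ops ! n")
    case (Incl \<sigma>)
    show ?thesis by (rule in_subtree_root_step_Incl[OF V assms(3) Incl assms(2)]) fact+
  next
    case (Contr u v)
    show ?thesis by (rule in_subtree_root_step_Contr[OF V assms(3) Contr assms(2)]) fact+
  qed
qed

lemma in_subtree_root_Suc_same_iff:
  assumes V: "valid_tower ops" and j: "j < length ops"
    and a: "a \<in> cAct ops (Suc j)" and w: "w \<in> cAct ops (Suc j)"
    and step: "a \<in> cAct ops j \<Longrightarrow>
      in_subtree ops (root_of ops (Suc j) w) (root_of ops j a) \<longleftrightarrow> tower_map ops j (Suc j) a = w"
  shows "in_subtree ops (root_of ops (Suc j) w) (root_of ops (Suc j) a) \<longleftrightarrow> a = w"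
proof (cases "is_node ops j \<and> node_label ops j = a")
  case True
  show ?thesis
  proof (cases "is_node ops j \<and> node_label ops j = w")
    case False
    then have "w \<in> cAct ops j" using cAct_Suc_cases[OF j w] by blast
    then have "\<not> in_subtree ops (root_of ops j w) j"
      using root_of_less[of j ops w] in_subtree_le[OF V] j by fastforce
    then show ?thesis using True False by (auto simp: root_of_Suc)
  qed (use True in \<open>simp add: root_of_Suc in_subtree.refl\<close>)
next
  case False
  then have "a \<in> cAct ops j" using cAct_Suc_cases[OF j a] by blast
  moreover have "tower_map ops j (Suc j) a = a" using vertex_map_fixes_active[OF j a] by simp
  moreover have "root_of ops (Suc j) a = root_of ops j a" using False by (auto simp: root_of_Suc)
  ultimately show ?thesis using step by simp
qed

lemma in_subtree_root_iff:
  assumes V: "valid_tower ops" and "t \<le> j" "j \<le> length ops" "a \<in> cAct ops t" "w \<in> cAct ops j"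
  shows "in_subtree ops (root_of ops j w) (root_of ops t a) \<longleftrightarrow> tower_map ops t j a = w"
  using assms(2-5)
proof (induction j arbitrary: t a w)
  case 0
  then show ?case by (simp add: cAct_0)
next
  case (Suc j)
  then have j: "j < length ops" by simp
  have step: "in_subtree ops (root_of ops (Suc j) w') (root_of ops t' a') \<longleftrightarrow> tower_map ops t' (Suc j) a' = w'"
    if "t' \<le> j" "a' \<in> cAct ops t'" "w' \<in> cAct ops (Suc j)" for t' a' w'
    using in_subtree_root_step[OF V that(1) j that(2) _ that(3)] Suc.IH[OF that(1) _ that(2)] j by simp
  show ?case
  proof (cases "t \<le> j")
    case True
    then show ?thesis using step Suc.prems by simp
  next
    case False
    then have "t = Suc j" using Suc.prems(1) by simp
    have "a \<in> cAct ops j \<Longrightarrow>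
        in_subtree ops (root_of ops (Suc j) w) (root_of ops j a) \<longleftrightarrow> tower_map ops j (Suc j) a = w"
      using step[of j a w] Suc.prems(4) by simp
    then show ?thesis
      using in_subtree_root_Suc_same_iff[OF V j _ Suc.prems(4)] Suc.prems(3) \<open>t = Suc j\<close> by simp
  qed
qed

lemma cK_eq_tower_map_image:
  assumes "j \<le> length ops" "\<rho> \<in> cK ops j"
  shows "\<exists>i \<sigma>. i < j \<and> ops ! i = Incl \<sigma> \<and> \<rho> = tower_map ops (Suc i) j ` \<sigma>"
  using assms
proof (induction j arbitrary: \<rho>)
  case 0
  then show ?case by (simp add: cK_def tstate_def)
next
  case (Suc j)
  then have j: "j < length ops" by simp
  show ?case
  proof (cases "ops ! j")
    case (Incl \<sigma>)
    show ?thesis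
    proof (cases "\<rho> = \<sigma>")
      case True
      then show ?thesis using Incl tower_map_same[of ops "Suc j"] by (metis id_apply image_id lessI)
    next
      case False
      then have "\<rho> \<in> cK ops j" using Suc.prems step_Incl(1)[OF j Incl] by simp
      then obtain i \<sigma>' where "i < j" "ops ! i = Incl \<sigma>'" "\<rho> = tower_map ops (Suc i) j ` \<sigma>'"
        using Suc.IH[OF less_imp_le[OF j]] by blast
      moreover have "tower_map ops (Suc i) (Suc j) = tower_map ops (Suc i) j"
        using \<open>i < j\<close> step_Incl(4)[OF j Incl] by simp
      ultimately show ?thesis by (metis less_Suc_eq)
    qed
  next
    case (Contr u v)
    obtain \<rho>' where "\<rho>' \<in> cK ops j" "\<rho> = vertex_map ops j ` \<rho>'"
      using Suc.prems step_Contr(1)[OF j Contr] by auto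
    moreover obtain i \<sigma>' where "i < j" "ops ! i = Incl \<sigma>'" "\<rho>' = tower_map ops (Suc i) j ` \<sigma>'"
      using Suc.IH[OF less_imp_le[OF j] \<open>\<rho>' \<in> cK ops j\<close>] by blast
    ultimately have "\<rho> = tower_map ops (Suc i) (Suc j) ` \<sigma>'"
      by (simp add: image_comp)
    then show ?thesis using \<open>i < j\<close> \<open>ops ! i = Incl \<sigma>'\<close> less_Suc_eq by blast
  qed
qed

lemma finite_E_set: "finite (E_set ops y)"
  unfolding E_set_def by (rule finite_subset[of _ "{..<length ops}"]) auto

lemma card_star_without_le_card_E_diff:
  assumes V: "valid_tower ops" and x: "x \<le> length ops"
    and w: "w \<in> cAct ops x" and w': "w' \<in> cAct ops x"
  shows "card {\<rho> \<in> cK ops x. w \<in> \<rho> \<and> w' \<notin> \<rho>}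
    \<le> card (E_set ops (root_of ops x w) - E_set ops (root_of ops x w'))"
proof -
  define img where "img i = (case ops ! i of Incl \<sigma> \<Rightarrow> tower_map ops (Suc i) x ` \<sigma> | Contr _ _ \<Rightarrow> {})"
    for i
  define F where "F = E_set ops (root_of ops x w) - E_set ops (root_of ops x w')"
  have "{\<rho> \<in> cK ops x. w \<in> \<rho> \<and> w' \<notin> \<rho>} \<subseteq> img ` F"
  proof
    fix \<rho> assume \<rho>: "\<rho> \<in> {\<rho> \<in> cK ops x. w \<in> \<rho> \<and> w' \<notin> \<rho>}"
    then obtain i \<sigma> where i: "i < x" "ops ! i = Incl \<sigma>" "\<rho> = tower_map ops (Suc i) x ` \<sigma>"
      using cK_eq_tower_map_image[OF x] by blast
    then have "i < length ops" using x by simp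
    have "\<sigma> \<subseteq> cAct ops (Suc i)"
      using step_Incl(1)[OF \<open>i < length ops\<close> i(2)] coning_invD(3)[OF coning_inv_tstate[OF V, of "Suc i"]]
        \<open>i < length ops\<close> by auto
    then have subtree_iff: "in_subtree ops (root_of ops x z) (root_of ops (Suc i) a)
        \<longleftrightarrow> tower_map ops (Suc i) x a = z" if "a \<in> \<sigma>" "z \<in> cAct ops x" for a z
      using in_subtree_root_iff[OF V _ x _ that(2)] i(1) that(1) by auto
    have "i \<in> E_set ops (root_of ops x w)"
      using \<rho> i subtree_iff[OF _ w] \<open>i < length ops\<close> unfolding E_set_def by auto
    moreover have "i \<notin> E_set ops (root_of ops x w')"
      using \<rho> i subtree_iff[OF _ w'] unfolding E_set_def by auto
    ultimately have "i \<in> F" unfolding F_def by simp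
    moreover have "\<rho> = img i" using i unfolding img_def by simp
    ultimately show "\<rho> \<in> img ` F" by blast
  qed
  moreover have "finite F" unfolding F_def by (intro finite_Diff finite_E_set)
  ultimately have "card {\<rho> \<in> cK ops x. w \<in> \<rho> \<and> w' \<notin> \<rho>} \<le> card (img ` F)"
    by (intro card_mono) simp_all
  also have "\<dots> \<le> card F" using \<open>finite F\<close> by (rule card_image_le)
  finally show ?thesis unfolding F_def .
qed

theorem lemma8:
  fixes ops :: "'v tower_op list" and x y1 y2 :: nat and u v :: 'v
  assumes "valid_tower ops"
    and "x < length ops" and "ops ! x = Contr u v"
    and "(y1 = root_of ops x u \<and> y2 = root_of ops x v) \<or>
         (y1 = root_of ops x v \<and> y2 = root_of ops x u)"
  shows "cost ops x \<le> 2 * card (E_set ops y1 - E_set ops y2)"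
proof -
  obtain a b where ab: "a = u \<and> b = v \<or> a = v \<and> b = u" "y1 = root_of ops x a" "y2 = root_of ops x b"
    using assms(4) by blast
  then have "a \<in> cAct ops x" "b \<in> cAct ops x" using Contr_active[OF assms(1-3)] by auto
  have "cost ops x \<le> 2 * card {\<rho> \<in> cK ops x. a \<in> \<rho> \<and> b \<notin> \<rho>}"
    by (rule contraction_cost_le[OF assms(1-3) ab(1)])
  also have "\<dots> \<le> 2 * card (E_set ops y1 - E_set ops y2)"
    using card_star_without_le_card_E_diff[OF assms(1) _ \<open>a \<in> cAct ops x\<close> \<open>b \<in> cAct ops x\<close>]
      assms(2) ab(2,3) by simp
  finally show ?thesis .
qed

end
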